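(* (a) For all $h,s\in\mathbb R$ there is $C_{h,s}<\infty$ such that for every $f\in L^2(\nu^* )$, $$\|\theta_sH_h[f]\|_{L^{2d}(\nu^* )}\le C_{h,s}\|f\|_{L^2(\nu^* )};$$ in particular $\theta_sH_h[f]\in L^{2d}(\nu^* )$. (b) The map $h\mapsto H_h$ from $I:=(h^*-1,h^*+1)$ to the space $B(L^2(\nu^* ),L^{2d}(\nu^* ))$ of bounded linear operators is (strongly) continuous.
   Context: Let $d\ge2$, $\sigma_\nu^2=\frac d{d-1}$, $\sigma_Y^2=\frac{d+1}d$, $\rho_\nu$ and $\rho_Y$ the densities of $\mathcal N(0,\sigma_\nu^2)$ and $\mathcal N(0,\sigma_Y^2)$, and $\nu=\mathcal N(0,\sigma_\nu^2)$. Let $h^*\in(0,\infty)$ be the critical level of level-set percolation of the Gaussian free field on the $(d+1)$-regular tree (for the purposes of this statement $h^*$ may be regarded as a fixed real number). Let $\nu^*$ be the probability measure with density $a\mapsto\rho_\nu(a+h^* )$. For $s\in\mathbb R$, $\theta_s$ is the shift $\theta_sg(x)=g(x+s)$. For $h\in\mathbb R$ define the operator $$H_h[f](a)=1_{[0,\infty)}(a)\int_0^\infty f(x)\,\rho_Y\Big(x-\frac ad+\frac{d-1}d h\Big)dx.$$ *)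

theory Defs
  imports "HOL-Probability.Probability"
begin

definition sigma_nu_sq :: "nat \<Rightarrow> real" where
  "sigma_nu_sq d = real d / (real d - 1)"

definition sigma_Y_sq :: "nat \<Rightarrow> real" where
  "sigma_Y_sq d = (real d + 1) / real d"

definition rho_nu :: "nat \<Rightarrow> real \<Rightarrow> real" where
  "rho_nu d = normal_density 0 (sqrt (sigma_nu_sq d))"

definition rho_Y :: "nat \<Rightarrow> real \<Rightarrow> real" where
  "rho_Y d = normal_density 0 (sqrt (sigma_Y_sq d))"

definition nu_star :: "nat \<Rightarrow> real \<Rightarrow> real measure" where
  "nu_star d hstar = density lborel (\<lambda>a. ennreal (rho_nu d (a + hstar)))"

definition theta :: "real \<Rightarrow> (real \<Rightarrow> real) \<Rightarrow> real \<Rightarrow> real" where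
  "theta s g = (\<lambda>x. g (x + s))"

definition H_op :: "nat \<Rightarrow> real \<Rightarrow> (real \<Rightarrow> real) \<Rightarrow> real \<Rightarrow> real" where
  "H_op d h f = (\<lambda>a. indicator {0..} a *
      (LINT x:{0..}|lborel. f x * rho_Y d (x - a / real d + (real d - 1) / real d * h)))"

definition memLp :: "'a measure \<Rightarrow> real \<Rightarrow> ('a \<Rightarrow> real) \<Rightarrow> bool" where
  "memLp M p f \<longleftrightarrow> f \<in> borel_measurable M \<and> integrable M (\<lambda>x. \<bar>f x\<bar> powr p)"

definition Lp_norm :: "'a measure \<Rightarrow> real \<Rightarrow> ('a \<Rightarrow> real) \<Rightarrow> real" where
  "Lp_norm M p f = (LINT x|M. \<bar>f x\<bar> powr p) powr (1 / p)"

end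

theory Submission
  imports Defs
begin

text \<open>
  Cauchy--Schwarz with weight \<open>\<rho>\<^sub>\<nu>(x + h\<^sup>*)\<close> bounds \<open>|H\<^sub>h f(a)|\<close> by \<open>\<parallel>f\<parallel>\<^sub>2\<close> times the
  square root of \<open>\<integral> \<rho>\<^sub>Y(x - b)\<^sup>2 / \<rho>\<^sub>\<nu>(x + h\<^sup>*) dx\<close>, where \<open>b = a/d - (d - 1) h / d\<close>. Because
  \<open>1/\<sigma>\<^sub>Y\<^sup>2 > 1/(2 \<sigma>\<^sub>\<nu>\<^sup>2)\<close> this Gaussian integral converges, to \<open>K exp (\<alpha> (b + h\<^sup>*)\<^sup>2)\<close>
  with \<open>\<alpha> = d (d - 1) / (d\<^sup>2 + 1)\<close>. Up to a shift and a constant, the \<open>2d\<close>-th power of the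
  resulting envelope is \<open>exp (\<alpha>/d \<cdot> a\<^sup>2)\<close>, and \<open>\<alpha>/d < 1/(2 \<sigma>\<^sub>\<nu>\<^sup>2)\<close> (equivalently
  \<open>(d - 1)\<^sup>2 > 0\<close>), so it is integrable against \<open>\<nu>\<^sup>*\<close>; this proves (a).
  For (b), \<open>H\<^sub>h f(a)\<close> is continuous in \<open>h\<close> by dominated convergence. The envelope depends on
  \<open>h\<close> through the exponential of a convex function, so for \<open>|h' - h| < 1\<close> it is dominated by the
  larger of the envelopes at \<open>h \<plusminus> 1\<close>, and dominated convergence applies again in \<open>L\<^sup>2\<^sup>d(\<nu>\<^sup>*)\<close>.
\<close>

lemma integral_exp_quadratic:
  fixes p q r :: real
  assumes p: "p > 0"
  shows "integrable lborel (\<lambda>x. exp (- p * x^2 + q * x + r))"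
    and "(LINT x|lborel. exp (- p * x^2 + q * x + r)) = sqrt (pi / p) * exp (q^2 / (4 * p) + r)"
proof -
  define \<mu> where "\<mu> = q / (2 * p)"
  define \<sigma> where "\<sigma> = sqrt (1 / (2 * p))"
  define K where "K = sqrt (pi / p) * exp (q^2 / (4 * p) + r)"
  have \<sigma>_pos: "\<sigma> > 0" and \<sigma>_sq: "\<sigma>^2 = 1 / (2 * p)"
    using p by (simp_all add: \<sigma>_def)
  have eq: "exp (- p * x^2 + q * x + r) = K * normal_density \<mu> \<sigma> x" for x
  proof -
    have "2 * pi * \<sigma>^2 = pi / p" using \<sigma>_sq p by (simp add: field_simps)
    then have "K * normal_density \<mu> \<sigma> x = exp (q^2 / (4 * p) + r) * exp (- ((x - \<mu>)^2 * p))"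
      unfolding normal_density_def K_def \<sigma>_sq using p by (simp add: real_sqrt_divide)
    also have "q^2 / (4 * p) + r + - ((x - \<mu>)^2 * p) = - p * x^2 + q * x + r"
      using p unfolding \<mu>_def by (simp add: field_simps power2_eq_square)
    then have "exp (q^2 / (4 * p) + r) * exp (- ((x - \<mu>)^2 * p)) = exp (- p * x^2 + q * x + r)"
      by (simp add: mult_exp_exp)
    finally show ?thesis by simp
  qed
  show "integrable lborel (\<lambda>x. exp (- p * x^2 + q * x + r))"
    unfolding eq using integrable_normal_density[OF \<sigma>_pos] by simp
  show "(LINT x|lborel. exp (- p * x^2 + q * x + r)) = sqrt (pi / p) * exp (q^2 / (4 * p) + r)"
    unfolding eq using integral_normal_density[OF \<sigma>_pos] by (simp add: K_def)
qed

lemma integral_exp_diff_squares: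
  fixes A B b c :: real
  assumes "B < A"
  shows "integrable lborel (\<lambda>x. exp (B * (x + c)^2 - A * (x - b)^2))"
    and "(LINT x|lborel. exp (B * (x + c)^2 - A * (x - b)^2))
           = sqrt (pi / (A - B)) * exp (A * B / (A - B) * (b + c)^2)"
proof -
  have p: "A - B > 0" using assms by simp
  have eq: "B * (x + c)^2 - A * (x - b)^2
      = - (A - B) * x^2 + (2 * A * b + 2 * B * c) * x + (B * c^2 - A * b^2)" for x
    by (simp add: power2_eq_square algebra_simps)
  have "(2 * A * b + 2 * B * c)^2 / (4 * (A - B)) + (B * c^2 - A * b^2)
      = ((A * b + B * c)^2 + (B * c^2 - A * b^2) * (A - B)) / (A - B)"
    using p by (simp add: field_simps power2_eq_square)
  also have "(A * b + B * c)^2 + (B * c^2 - A * b^2) * (A - B) = A * B * (b + c)^2"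
    by (simp add: power2_eq_square algebra_simps)
  finally have exponent: "(2 * A * b + 2 * B * c)^2 / (4 * (A - B)) + (B * c^2 - A * b^2)
      = A * B / (A - B) * (b + c)^2" by simp
  show "integrable lborel (\<lambda>x. exp (B * (x + c)^2 - A * (x - b)^2))"
    unfolding eq by (rule integral_exp_quadratic(1)[OF p])
  show "(LINT x|lborel. exp (B * (x + c)^2 - A * (x - b)^2))
           = sqrt (pi / (A - B)) * exp (A * B / (A - B) * (b + c)^2)"
    unfolding eq integral_exp_quadratic(2)[OF p] exponent ..
qed

lemma le_sqrt_mult_if_le_weighted_means:
  fixes I N K :: real
  assumes "N \<ge> 0" "K \<ge> 0" and le: "\<And>t. t > 0 \<Longrightarrow> I \<le> (t * N + K / t) / 2"
  shows "I \<le> sqrt N * sqrt K"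
proof (rule tendsto_lowerbound)
  show "((\<lambda>e. (sqrt N + e) * (sqrt K + e)) \<longlongrightarrow> sqrt N * sqrt K) (at_right 0)"
    by (auto intro!: tendsto_eq_intros)
  show "\<forall>\<^sub>F e in at_right 0. I \<le> (sqrt N + e) * (sqrt K + e)"
  proof (rule eventually_at_rightI[of 0 1])
    fix e :: real assume "e \<in> {0<..<1}"
    then have e: "e > 0" by simp
    define t where "t = (sqrt K + e) / (sqrt N + e)"
    have pos: "sqrt N + e > 0" "sqrt K + e > 0" using e assms(1,2) by (simp_all add: add_nonneg_pos)
    then have t: "t > 0" by (simp add: t_def)
    have sq_le: "x \<le> (sqrt x + e)^2" if "x \<ge> 0" for x
    proof -
      have "(sqrt x)^2 \<le> (sqrt x + e)^2" using e that by (intro power_mono) auto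
      then show ?thesis using that by simp
    qed
    have N: "N \<le> (sqrt N + e)^2" and K: "K \<le> (sqrt K + e)^2"
      using sq_le assms(1,2) by auto
    have "t * N \<le> (sqrt K + e) * (sqrt N + e)"
      using mult_left_mono[OF N, of "(sqrt K + e) / (sqrt N + e)"] pos
      by (simp add: t_def power2_eq_square)
    moreover have "K / t \<le> (sqrt N + e) * (sqrt K + e)"
      using mult_left_mono[OF K, of "(sqrt N + e) / (sqrt K + e)"] pos
      by (simp add: t_def power2_eq_square mult.commute)
    ultimately show "I \<le> (sqrt N + e) * (sqrt K + e)"
      using le[OF t] by (simp add: algebra_simps)
  qed simp
qed simp

lemma abs_mult_le_weighted_mean:
  fixes t g u v :: real
  assumes "t > 0" "g > 0"
  shows "\<bar>u * v\<bar> \<le> (t * (u^2 * g) + v^2 / g / t) / 2"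
proof -
  have "0 \<le> (t * g * \<bar>u\<bar> - \<bar>v\<bar>)^2" by simp
  then have "2 * (t * g) * \<bar>u * v\<bar> \<le> (t * g)^2 * u^2 + v^2"
    by (simp add: power2_eq_square abs_mult algebra_simps)
  then show ?thesis using assms by (simp add: field_simps power2_eq_square)
qed

lemma weighted_cauchy_schwarz:
  fixes f \<phi> g :: "'a \<Rightarrow> real"
  assumes [measurable]: "f \<in> borel_measurable M" "\<phi> \<in> borel_measurable M" "g \<in> borel_measurable M"
    and g_pos: "\<And>x. g x > 0"
    and int_f: "integrable M (\<lambda>x. f x^2 * g x)"
    and int_\<phi>: "integrable M (\<lambda>x. \<phi> x^2 / g x)"
  shows "integrable M (\<lambda>x. f x * \<phi> x)"
    and "\<bar>LINT x|M. f x * \<phi> x\<bar> \<le> sqrt (LINT x|M. f x^2 * g x) * sqrt (LINT x|M. \<phi> x^2 / g x)"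
proof -
  define m where "m t x = (t * (f x^2 * g x) + \<phi> x^2 / g x / t) / 2" for t x
  have bound: "\<bar>f x * \<phi> x\<bar> \<le> m t x" if "t > 0" for t x
    unfolding m_def using abs_mult_le_weighted_mean[OF that g_pos] .
  have int_m: "integrable M (m t)" for t
    unfolding m_def
    by (intro integrable_divide_zero Bochner_Integration.integrable_add integrable_mult_right int_f int_\<phi>)
  show int: "integrable M (\<lambda>x. f x * \<phi> x)"
    by (rule Bochner_Integration.integrable_bound[OF int_m[of 1]]) (use bound[of 1] in \<open>auto intro: order_trans[OF _ abs_ge_self]\<close>)
  show "\<bar>LINT x|M. f x * \<phi> x\<bar> \<le> sqrt (LINT x|M. f x^2 * g x) * sqrt (LINT x|M. \<phi> x^2 / g x)"
  proof (rule le_sqrt_mult_if_le_weighted_means)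
    show "0 \<le> (LINT x|M. f x^2 * g x)" "0 \<le> (LINT x|M. \<phi> x^2 / g x)"
      using g_pos by (auto intro!: integral_nonneg_AE AE_I2 divide_nonneg_pos simp: less_imp_le)
    fix t :: real assume t: "t > 0"
    have "\<bar>LINT x|M. f x * \<phi> x\<bar> \<le> (LINT x|M. \<bar>f x * \<phi> x\<bar>)"
      by (rule integral_abs_bound)
    also have "\<dots> \<le> (LINT x|M. m t x)"
      by (rule integral_mono[OF _ int_m bound[OF t]]) (use int in auto)
    also have "\<dots> = (t * (LINT x|M. f x^2 * g x) + (LINT x|M. \<phi> x^2 / g x) / t) / 2"
      unfolding m_def using int_f int_\<phi> by (simp del: divide_divide_eq_left)
    finally show "\<bar>LINT x|M. f x * \<phi> x\<bar>
        \<le> (t * (LINT x|M. f x^2 * g x) + (LINT x|M. \<phi> x^2 / g x) / t) / 2" .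
  qed
qed

lemma integral_dominated_convergence_at:
  fixes s :: "'b::first_countable_topology \<Rightarrow> 'a \<Rightarrow> real" and f w :: "'a \<Rightarrow> real"
  assumes "f \<in> borel_measurable M" "\<And>t. s t \<in> borel_measurable M" "integrable M w"
    and lim: "AE x in M. ((\<lambda>t. s t x) \<longlongrightarrow> f x) (at h within S)"
    and bound: "\<forall>\<^sub>F t in at h within S. AE x in M. \<bar>s t x\<bar> \<le> w x"
  shows "((\<lambda>t. LINT x|M. s t x) \<longlongrightarrow> (LINT x|M. f x)) (at h within S)"
  unfolding tendsto_at_iff_sequentially comp_def
proof (intro allI impI)
  fix X :: "nat \<Rightarrow> 'b" assume "\<forall>i. X i \<in> S - {h}" "X \<longlonglongrightarrow> h"
  then have X: "filterlim X (at h within S) sequentially"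
    by (simp add: filterlim_at)
  from filterlim_iff[THEN iffD1, OF X, rule_format, OF bound]
  obtain N where w: "\<And>n. N \<le> n \<Longrightarrow> AE x in M. \<bar>s (X n) x\<bar> \<le> w x"
    by (auto simp: eventually_sequentially)
  show "(\<lambda>n. LINT x|M. s (X n) x) \<longlonglongrightarrow> (LINT x|M. f x)"
  proof (rule LIMSEQ_offset, rule integral_dominated_convergence)
    show "AE x in M. norm (s (X (n + N)) x) \<le> w x" for n
      using w[of "n + N"] by simp
    show "AE x in M. (\<lambda>n. s (X (n + N)) x) \<longlonglongrightarrow> f x"
      using lim
    proof eventually_elim
      fix x assume "((\<lambda>t. s t x) \<longlongrightarrow> f x) (at h within S)"
      then show "(\<lambda>n. s (X (n + N)) x) \<longlonglongrightarrow> f x"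
        by (intro LIMSEQ_ignore_initial_segment filterlim_compose[OF _ X])
    qed
  qed (use assms in auto)
qed

lemma Lp_norm_nonneg: "Lp_norm M p f \<ge> 0"
  by (simp add: Lp_norm_def)

lemma memLp_Lp_norm_le_if_abs_le:
  assumes [measurable]: "F \<in> borel_measurable M" and G: "memLp M p G"
    and "p > 0" "N \<ge> 0" and le: "\<And>x. \<bar>F x\<bar> \<le> N * \<bar>G x\<bar>"
  shows "memLp M p F" and "Lp_norm M p F \<le> N * Lp_norm M p G"
proof -
  have pow_le: "\<bar>F x\<bar> powr p \<le> N powr p * \<bar>G x\<bar> powr p" for x
    using powr_mono2[OF _ _ le[of x]] \<open>p > 0\<close> \<open>N \<ge> 0\<close> by (simp add: powr_mult)
  have int_G: "integrable M (\<lambda>x. N powr p * \<bar>G x\<bar> powr p)"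
    using G by (simp add: memLp_def)
  have int_F: "integrable M (\<lambda>x. \<bar>F x\<bar> powr p)"
    by (rule Bochner_Integration.integrable_bound[OF int_G]) (use pow_le in auto)
  then show "memLp M p F" by (simp add: memLp_def)
  have "(LINT x|M. \<bar>F x\<bar> powr p) \<le> N powr p * (LINT x|M. \<bar>G x\<bar> powr p)"
    using integral_mono[OF int_F int_G pow_le] by simp
  then have "Lp_norm M p F \<le> (N powr p * (LINT x|M. \<bar>G x\<bar> powr p)) powr (1 / p)"
    unfolding Lp_norm_def using \<open>p > 0\<close> by (intro powr_mono2) auto
  also have "\<dots> = N * Lp_norm M p G"
    unfolding Lp_norm_def using \<open>p > 0\<close> \<open>N \<ge> 0\<close>
    by (simp add: powr_mult powr_powr integral_nonneg_AE)
  finally show "Lp_norm M p F \<le> N * Lp_norm M p G" .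
qed

definition prec_Y :: "nat \<Rightarrow> real" where
  "prec_Y d = 1 / sigma_Y_sq d"

definition prec_nu :: "nat \<Rightarrow> real" where
  "prec_nu d = 1 / sigma_nu_sq d"

lemma sigma_Y_sq_pos: "d > 0 \<Longrightarrow> sigma_Y_sq d > 0"
  by (simp add: sigma_Y_sq_def)

lemma sigma_nu_sq_pos: "d > 1 \<Longrightarrow> sigma_nu_sq d > 0"
  by (simp add: sigma_nu_sq_def)

lemma rho_Y_pos: "d > 0 \<Longrightarrow> rho_Y d y > 0"
  unfolding rho_Y_def by (intro normal_density_pos) (simp add: sigma_Y_sq_pos)

lemma rho_nu_pos: "d > 1 \<Longrightarrow> rho_nu d y > 0"
  unfolding rho_nu_def by (intro normal_density_pos) (simp add: sigma_nu_sq_pos)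

lemma rho_measurable [measurable]:
  "rho_nu d \<in> borel_measurable borel" "rho_Y d \<in> borel_measurable borel"
  by (simp_all add: rho_nu_def rho_Y_def)

lemma rho_Y_gaussian: "d > 0 \<Longrightarrow> rho_Y d y = rho_Y d 0 * exp (- prec_Y d / 2 * y^2)"
  using sigma_Y_sq_pos[of d] unfolding rho_Y_def normal_density_def prec_Y_def by simp

lemma rho_nu_gaussian: "d > 1 \<Longrightarrow> rho_nu d y = rho_nu d 0 * exp (- prec_nu d / 2 * y^2)"
  using sigma_nu_sq_pos[of d] unfolding rho_nu_def normal_density_def prec_nu_def by simp

lemma prec_Y_eq: "prec_Y d = real d / (real d + 1)"
  by (simp add: prec_Y_def sigma_Y_sq_def)

lemma prec_nu_eq: "prec_nu d = (real d - 1) / real d"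
  by (simp add: prec_nu_def sigma_nu_sq_def)

lemma prec_nu_less_prec_Y: "d > 0 \<Longrightarrow> prec_nu d < prec_Y d"
  by (simp add: prec_nu_eq prec_Y_eq field_simps)

lemma half_prec_nu_less_prec_Y: "d > 0 \<Longrightarrow> prec_nu d / 2 < prec_Y d"
proof -
  assume "d > 0"
  moreover from this have "prec_nu d \<ge> 0" by (simp add: prec_nu_eq)
  ultimately show ?thesis using prec_nu_less_prec_Y[of d] by linarith
qed

definition kernel_rate :: "nat \<Rightarrow> real" where
  "kernel_rate d = prec_Y d * (prec_nu d / 2) / (prec_Y d - prec_nu d / 2)"

definition kernel_const :: "nat \<Rightarrow> real" where
  "kernel_const d = rho_Y d 0 ^ 2 / rho_nu d 0 * sqrt (pi / (prec_Y d - prec_nu d / 2))"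

lemma kernel_rate_eq:
  assumes "d > 0" shows "kernel_rate d = real d * (real d - 1) / ((real d)^2 + 1)"
proof -
  have num: "prec_Y d * (prec_nu d / 2) = (real d - 1) / (2 * (real d + 1))"
    unfolding prec_nu_eq prec_Y_eq using assms by (simp add: divide_simps)
  have den: "prec_Y d - prec_nu d / 2 = ((real d)^2 + 1) / (2 * real d * (real d + 1))"
    unfolding prec_nu_eq prec_Y_eq using assms
    by (simp add: divide_simps) (simp add: algebra_simps power2_eq_square)
  show ?thesis
    unfolding kernel_rate_def num den using assms by (simp add: divide_simps)
qed

lemma kernel_rate_nonneg: "d > 0 \<Longrightarrow> kernel_rate d \<ge> 0"
  by (simp add: kernel_rate_eq)

lemma kernel_rate_div_less: "d \<ge> 2 \<Longrightarrow> kernel_rate d / real d < prec_nu d / 2"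
proof -
  assume d: "d \<ge> 2"
  then have "2 * real d < (real d)^2 + 1"
    using power_strict_mono[of 0 "real d - 1" 2] by (simp add: power2_eq_square algebra_simps)
  then have "(real d - 1) / ((real d)^2 + 1) < (real d - 1) / (2 * real d)"
    using d by (intro divide_strict_left_mono) auto
  then show ?thesis
    using d by (simp add: kernel_rate_eq prec_nu_eq power2_eq_square)
qed

lemma kernel_const_pos: "d > 1 \<Longrightarrow> kernel_const d > 0"
  using rho_Y_pos[of d 0] rho_nu_pos[of d 0] half_prec_nu_less_prec_Y[of d]
  by (simp add: kernel_const_def)

lemma rho_Y_sq_div_rho_nu:
  assumes "d > 1"
  shows "rho_Y d (x - b)^2 / rho_nu d (x + c)
    = rho_Y d 0 ^ 2 / rho_nu d 0 * exp (prec_nu d / 2 * (x + c)^2 - prec_Y d * (x - b)^2)"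
proof -
  have "rho_Y d (x - b)^2 / rho_nu d (x + c) = rho_Y d 0 ^ 2 / rho_nu d 0
      * (exp (- prec_Y d / 2 * (x - b)^2) ^ 2 / exp (- prec_nu d / 2 * (x + c)^2))"
    using assms rho_Y_gaussian[of d "x - b"] rho_nu_gaussian[of d "x + c"]
    by (simp add: power_mult_distrib)
  also have "exp (- prec_Y d / 2 * (x - b)^2) ^ 2 / exp (- prec_nu d / 2 * (x + c)^2)
      = exp (2 * (- prec_Y d / 2 * (x - b)^2) - (- prec_nu d / 2 * (x + c)^2))"
    by (simp only: exp_double exp_diff)
  finally show ?thesis by simp
qed

lemma kernel_integral:
  assumes "d > 1"
  shows "integrable lborel (\<lambda>x. rho_Y d (x - b)^2 / rho_nu d (x + c))"
    and "(LINT x|lborel. rho_Y d (x - b)^2 / rho_nu d (x + c))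
           = kernel_const d * exp (kernel_rate d * (b + c)^2)"
proof -
  have less: "prec_nu d / 2 < prec_Y d"
    using half_prec_nu_less_prec_Y[of d] assms by simp
  note gauss = integral_exp_diff_squares[OF less, of c b]
  show "integrable lborel (\<lambda>x. rho_Y d (x - b)^2 / rho_nu d (x + c))"
    unfolding rho_Y_sq_div_rho_nu[OF assms] using gauss(1) by simp
  show "(LINT x|lborel. rho_Y d (x - b)^2 / rho_nu d (x + c))
           = kernel_const d * exp (kernel_rate d * (b + c)^2)"
    unfolding rho_Y_sq_div_rho_nu[OF assms] gauss(2) integral_mult_right_zero
    by (simp add: kernel_const_def kernel_rate_def)
qed

lemma rho_Y_sq_div_rho_nu_le:
  assumes "d > 1" and b: "\<bar>b\<bar> \<le> R"
  shows "rho_Y d (x - b)^2 / rho_nu d (x + c)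
    \<le> rho_Y d 0 ^ 2 / rho_nu d 0 * exp (prec_Y d * R^2)
       * exp (prec_nu d / 2 * (x + c)^2 - prec_Y d / 2 * x^2)"
proof -
  have "b^2 \<le> R^2" using power_mono[OF b abs_ge_zero, of 2] by simp
  moreover have "0 \<le> (x - 2 * b)^2" by simp
  ultimately have "x^2 / 2 - R^2 \<le> (x - b)^2" by (simp add: power2_eq_square algebra_simps)
  then have "prec_Y d * (x^2 / 2 - R^2) \<le> prec_Y d * (x - b)^2"
    using assms(1) by (intro mult_left_mono) (simp_all add: prec_Y_eq)
  then have "prec_nu d / 2 * (x + c)^2 - prec_Y d * (x - b)^2
      \<le> prec_Y d * R^2 + (prec_nu d / 2 * (x + c)^2 - prec_Y d / 2 * x^2)"
    by (simp add: algebra_simps)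
  then show ?thesis
    unfolding rho_Y_sq_div_rho_nu[OF assms(1)] mult.assoc exp_add[symmetric]
    using rho_Y_pos[of d 0] rho_nu_pos[of d 0] assms(1)
    by (intro mult_left_mono) auto
qed

lemma integrable_nu_star_iff:
  assumes "d > 1" and [measurable]: "F \<in> borel_measurable borel"
  shows "integrable (nu_star d hstar) F \<longleftrightarrow> integrable lborel (\<lambda>a. rho_nu d (a + hstar) * F a)"
  unfolding nu_star_def using rho_nu_pos[OF assms(1)]
  by (subst integrable_density) (auto simp: less_imp_le)

lemma integral_nu_star:
  assumes "d > 1" and [measurable]: "F \<in> borel_measurable borel"
  shows "integral\<^sup>L (nu_star d hstar) F = (LINT a|lborel. rho_nu d (a + hstar) * F a)"
  unfolding nu_star_def using rho_nu_pos[OF assms(1)]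
  by (subst integral_density) (auto simp: less_imp_le)

lemma memLp_two_nu_star:
  assumes "d > 1" and f: "memLp (nu_star d hstar) 2 f"
  shows "f \<in> borel_measurable borel"
    and "integrable lborel (\<lambda>x. f x^2 * rho_nu d (x + hstar))"
    and "Lp_norm (nu_star d hstar) 2 f = sqrt (LINT x|lborel. f x^2 * rho_nu d (x + hstar))"
proof -
  have abs_powr_two: "\<bar>y\<bar> powr 2 = y^2" for y :: real
    using powr_realpow'[of "\<bar>y\<bar>" 2] by simp
  show f_meas [measurable]: "f \<in> borel_measurable borel"
    using f unfolding memLp_def nu_star_def by simp
  show "integrable lborel (\<lambda>x. f x^2 * rho_nu d (x + hstar))"
    using f integrable_nu_star_iff[OF assms(1), of "\<lambda>x. f x^2"]
    by (simp add: memLp_def abs_powr_two mult.commute)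
  have "0 \<le> (LINT x|lborel. f x^2 * rho_nu d (x + hstar))"
    using rho_nu_pos[OF assms(1)] by (intro integral_nonneg_AE AE_I2) (simp add: less_imp_le)
  then show "Lp_norm (nu_star d hstar) 2 f = sqrt (LINT x|lborel. f x^2 * rho_nu d (x + hstar))"
    unfolding Lp_norm_def abs_powr_two integral_nu_star[OF assms(1) borel_measurable_power[OF f_meas]]
    by (simp add: powr_half_sqrt mult.commute)
qed

definition kernel_centre :: "nat \<Rightarrow> real \<Rightarrow> real \<Rightarrow> real" where
  "kernel_centre d h a = a / real d - (real d - 1) / real d * h"

lemma H_op_eq: "H_op d h f a = indicator {0..} a *
    (LINT x|lborel. indicator {0..} x * f x * rho_Y d (x - kernel_centre d h a))"
  unfolding H_op_def set_lebesgue_integral_def kernel_centre_def by (simp add: algebra_simps)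

lemma abs_kernel_centre_le:
  assumes "d > 0" "\<bar>t - h\<bar> < 1"
  shows "\<bar>kernel_centre d t a\<bar> \<le> \<bar>a\<bar> / real d + \<bar>h\<bar> + 1"
proof -
  have c: "0 \<le> (real d - 1) / real d" "(real d - 1) / real d \<le> 1" using assms(1) by auto
  then have "\<bar>(real d - 1) / real d * t\<bar> \<le> \<bar>t\<bar>"
    unfolding abs_mult abs_of_nonneg[OF c(1)] by (intro mult_left_le_one_le) auto
  moreover have "\<bar>kernel_centre d t a\<bar> \<le> \<bar>a / real d\<bar> + \<bar>(real d - 1) / real d * t\<bar>"
    unfolding kernel_centre_def by (rule abs_triangle_ineq4)
  ultimately show ?thesis
    using assms(2) by simp
qed

lemma H_op_measurable [measurable]:
  assumes [measurable]: "f \<in> borel_measurable borel"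
  shows "H_op d h f \<in> borel_measurable borel"
  unfolding H_op_eq[abs_def] kernel_centre_def by measurable

definition H_envelope :: "nat \<Rightarrow> real \<Rightarrow> real \<Rightarrow> real \<Rightarrow> real" where
  "H_envelope d hstar h a = sqrt (kernel_const d * exp (kernel_rate d * (kernel_centre d h a + hstar)^2))"

lemma H_envelope_nonneg: "d > 1 \<Longrightarrow> H_envelope d hstar h a \<ge> 0"
  using kernel_const_pos[of d] by (simp add: H_envelope_def)

lemma H_envelope_measurable [measurable]: "H_envelope d hstar h \<in> borel_measurable borel"
  unfolding H_envelope_def[abs_def] kernel_centre_def by measurable

lemma abs_H_op_le:
  assumes d: "d > 1" and f: "memLp (nu_star d hstar) 2 f"
  shows "\<bar>H_op d h f a\<bar> \<le> Lp_norm (nu_star d hstar) 2 f * H_envelope d hstar h a"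
proof -
  note f_meas [measurable] = memLp_two_nu_star(1)[OF d f]
  define b where "b = kernel_centre d h a"
  define \<phi> where "\<phi> x = indicator {0..} x * rho_Y d (x - b)" for x
  have \<phi>_sq: "\<phi> x^2 / rho_nu d (x + hstar)
      = indicator {0..} x * (rho_Y d (x - b)^2 / rho_nu d (x + hstar))" for x
    by (simp add: \<phi>_def indicator_def)
  have int_\<phi>: "integrable lborel (\<lambda>x. \<phi> x^2 / rho_nu d (x + hstar))"
    unfolding \<phi>_sq mult.commute[of "indicator _ _"]
    by (intro integrable_real_mult_indicator kernel_integral(1)[OF d]) simp
  have "(LINT x|lborel. \<phi> x^2 / rho_nu d (x + hstar))
      \<le> (LINT x|lborel. rho_Y d (x - b)^2 / rho_nu d (x + hstar))"
    using int_\<phi> kernel_integral(1)[OF d] rho_Y_pos[of d] rho_nu_pos[OF d]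
    by (intro integral_mono) (auto simp: \<phi>_sq indicator_def less_imp_le)
  then have kernel_le: "(LINT x|lborel. \<phi> x^2 / rho_nu d (x + hstar))
      \<le> kernel_const d * exp (kernel_rate d * (b + hstar)^2)"
    unfolding kernel_integral(2)[OF d] .
  have "\<bar>H_op d h f a\<bar> \<le> \<bar>LINT x|lborel. f x * \<phi> x\<bar>"
    unfolding H_op_eq b_def[symmetric] \<phi>_def by (simp add: indicator_def abs_mult mult_ac)
  also have "\<dots> \<le> Lp_norm (nu_star d hstar) 2 f * sqrt (LINT x|lborel. \<phi> x^2 / rho_nu d (x + hstar))"
    unfolding memLp_two_nu_star(3)[OF d f]
    by (rule weighted_cauchy_schwarz(2)[OF _ _ _ rho_nu_pos[OF d] memLp_two_nu_star(2)[OF d f] int_\<phi>])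
      (simp_all add: \<phi>_def)
  also have "\<dots> \<le> Lp_norm (nu_star d hstar) 2 f * H_envelope d hstar h a"
    unfolding H_envelope_def b_def[symmetric] using kernel_le
    by (intro mult_left_mono Lp_norm_nonneg) simp
  finally show ?thesis .
qed

lemma H_envelope_le_max:
  assumes "d > 1" "t\<^sub>1 \<le> t" "t \<le> t\<^sub>2"
  shows "H_envelope d hstar t a \<le> max (H_envelope d hstar t\<^sub>1 a) (H_envelope d hstar t\<^sub>2 a)"
proof -
  define y where "y t = kernel_centre d t a + hstar" for t
  have "y t\<^sub>2 \<le> y t" "y t \<le> y t\<^sub>1"
    using assms by (auto simp: y_def kernel_centre_def intro!: divide_right_mono mult_left_mono)
  then have "\<bar>y t\<bar> \<le> \<bar>y t\<^sub>1\<bar> \<or> \<bar>y t\<bar> \<le> \<bar>y t\<^sub>2\<bar>"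
    by linarith
  moreover have "H_envelope d hstar t a \<le> H_envelope d hstar t' a" if "\<bar>y t\<bar> \<le> \<bar>y t'\<bar>" for t'
    using that kernel_rate_nonneg[of d] kernel_const_pos[of d] assms(1)
    by (auto simp: H_envelope_def y_def[symmetric] abs_le_square_iff intro!: mult_left_mono)
  ultimately show ?thesis by (auto simp: le_max_iff_disj)
qed

lemma integrable_H_envelope_powr:
  assumes d: "d \<ge> 2"
  shows "integrable (nu_star d hstar) (\<lambda>a. H_envelope d hstar h (a + s) powr (2 * real d))"
proof -
  have d1: "d > 1" using d by simp
  define v where "v = s + real d * hstar - (real d - 1) * h"
  have centre: "kernel_centre d h (a + s) + hstar = (a + v) / real d" for a
    using d by (simp add: kernel_centre_def v_def field_simps)
  have powr_eq: "H_envelope d hstar h (a + s) powr (2 * real d)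
      = kernel_const d powr real d * exp (kernel_rate d / real d * (a + v)^2)" for a
  proof -
    have "H_envelope d hstar h (a + s) powr (2 * real d)
        = (kernel_const d * exp (kernel_rate d * ((a + v) / real d)^2)) powr real d"
      unfolding H_envelope_def centre using kernel_const_pos[OF d1]
      by (simp add: powr_half_sqrt[symmetric] powr_powr)
    also have "\<dots> = kernel_const d powr real d * exp (kernel_rate d / real d * (a + v)^2)"
      using kernel_const_pos[OF d1] d
      by (simp add: powr_mult exp_powr_real power_divide power2_eq_square field_simps)
    finally show ?thesis .
  qed
  have integrand: "rho_nu d (a + hstar) * H_envelope d hstar h (a + s) powr (2 * real d)
      = rho_nu d 0 * kernel_const d powr real d
        * exp (kernel_rate d / real d * (a + v)^2 - prec_nu d / 2 * (a - - hstar)^2)" for a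
    unfolding powr_eq rho_nu_gaussian[OF d1, of "a + hstar"] exp_diff
    by (simp add: exp_minus field_simps)
  have meas: "(\<lambda>a. H_envelope d hstar h (a + s) powr (2 * real d)) \<in> borel_measurable borel"
    by measurable
  show ?thesis
    unfolding integrable_nu_star_iff[OF d1 meas] integrand
    using integral_exp_diff_squares(1)[OF kernel_rate_div_less[OF d], of v "- hstar"] by simp
qed

lemma memLp_shifted_H_op:
  assumes d: "d \<ge> 2" and f: "memLp (nu_star d hstar) 2 f"
  shows "memLp (nu_star d hstar) (2 * real d) (theta s (H_op d h f))"
    and "Lp_norm (nu_star d hstar) (2 * real d) (theta s (H_op d h f))
           \<le> Lp_norm (nu_star d hstar) 2 f
             * Lp_norm (nu_star d hstar) (2 * real d) (\<lambda>a. H_envelope d hstar h (a + s))"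
proof -
  have d1: "d > 1" using d by simp
  note f_meas [measurable] = memLp_two_nu_star(1)[OF d1 f]
  have envelope: "memLp (nu_star d hstar) (2 * real d) (\<lambda>a. H_envelope d hstar h (a + s))"
    using integrable_H_envelope_powr[OF d] H_envelope_nonneg[OF d1]
    by (simp add: memLp_def nu_star_def)
  have meas: "theta s (H_op d h f) \<in> borel_measurable (nu_star d hstar)"
    by (simp add: theta_def nu_star_def)
  have le: "\<bar>theta s (H_op d h f) a\<bar>
      \<le> Lp_norm (nu_star d hstar) 2 f * \<bar>H_envelope d hstar h (a + s)\<bar>" for a
    using abs_H_op_le[OF d1 f] H_envelope_nonneg[OF d1] by (simp add: theta_def)
  have "2 * real d > 0" using d by simp
  from memLp_Lp_norm_le_if_abs_le[OF meas envelope this Lp_norm_nonneg le]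
  show "memLp (nu_star d hstar) (2 * real d) (theta s (H_op d h f))"
    and "Lp_norm (nu_star d hstar) (2 * real d) (theta s (H_op d h f))
           \<le> Lp_norm (nu_star d hstar) 2 f
             * Lp_norm (nu_star d hstar) (2 * real d) (\<lambda>a. H_envelope d hstar h (a + s))" .
qed

lemma eventually_at_dist_less: "e > 0 \<Longrightarrow> \<forall>\<^sub>F t in at h within S. \<bar>t - h\<bar> < (e::real)"
  unfolding eventually_at dist_real_def by blast

lemma abs_H_op_integrand_le:
  assumes d: "d > 1" and b: "\<bar>b\<bar> \<le> R"
  shows "\<bar>indicator {0..} x * f x * rho_Y d (x - b)\<bar>
    \<le> (f x^2 * rho_nu d (x + hstar) + rho_Y d 0 ^ 2 / rho_nu d 0 * exp (prec_Y d * R^2)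
        * exp (prec_nu d / 2 * (x + hstar)^2 - prec_Y d / 2 * x^2)) / 2"
proof -
  have "\<bar>indicator {0..} x * f x * rho_Y d (x - b)\<bar> \<le> \<bar>f x * rho_Y d (x - b)\<bar>"
    by (simp add: indicator_def abs_mult)
  also have "\<dots> \<le> (1 * (f x^2 * rho_nu d (x + hstar)) + rho_Y d (x - b)^2 / rho_nu d (x + hstar) / 1) / 2"
    by (rule abs_mult_le_weighted_mean) (simp_all add: rho_nu_pos[OF d])
  also have "\<dots> \<le> (f x^2 * rho_nu d (x + hstar) + rho_Y d 0 ^ 2 / rho_nu d 0 * exp (prec_Y d * R^2)
        * exp (prec_nu d / 2 * (x + hstar)^2 - prec_Y d / 2 * x^2)) / 2"
    unfolding mult_1 div_by_1
    by (rule divide_right_mono[OF add_left_mono[OF rho_Y_sq_div_rho_nu_le[OF d b]]]) simp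
  finally show ?thesis .
qed

lemma tendsto_H_op_level:
  assumes d: "d > 1" and f: "memLp (nu_star d hstar) 2 f"
  shows "((\<lambda>t. H_op d t f a) \<longlongrightarrow> H_op d h f a) (at h)"
proof -
  note f_meas [measurable] = memLp_two_nu_star(1)[OF d f]
  define R where "R = \<bar>a\<bar> / real d + \<bar>h\<bar> + 1"
  define w where "w x = (f x^2 * rho_nu d (x + hstar) + rho_Y d 0 ^ 2 / rho_nu d 0
      * exp (prec_Y d * R^2) * exp (prec_nu d / 2 * (x + hstar)^2 - prec_Y d / 2 * x^2)) / 2" for x
  have "prec_nu d / 2 < prec_Y d / 2"
    using prec_nu_less_prec_Y[of d] d by simp
  from integral_exp_diff_squares(1)[OF this, of hstar 0]
  have int_w: "integrable lborel w"
    unfolding w_def using memLp_two_nu_star(2)[OF d f] by simp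
  have "((\<lambda>t. LINT x|lborel. indicator {0..} x * f x * rho_Y d (x - kernel_centre d t a))
      \<longlongrightarrow> (LINT x|lborel. indicator {0..} x * f x * rho_Y d (x - kernel_centre d h a))) (at h)"
  proof (rule integral_dominated_convergence_at[OF _ _ int_w])
    show "AE x in lborel. ((\<lambda>t. indicator {0..} x * f x * rho_Y d (x - kernel_centre d t a))
        \<longlongrightarrow> indicator {0..} x * f x * rho_Y d (x - kernel_centre d h a)) (at h)"
      unfolding rho_Y_def normal_density_def kernel_centre_def using sigma_Y_sq_pos[of d] d
      by (intro AE_I2 tendsto_intros) auto
    show "\<forall>\<^sub>F t in at h. AE x in lborel.
        \<bar>indicator {0..} x * f x * rho_Y d (x - kernel_centre d t a)\<bar> \<le> w x"
      using eventually_at_dist_less[OF zero_less_one]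
    proof eventually_elim
      case (elim t)
      with d have "\<bar>kernel_centre d t a\<bar> \<le> R"
        unfolding R_def by (intro abs_kernel_centre_le) auto
      then show ?case
        unfolding w_def by (intro AE_I2 abs_H_op_integrand_le[OF d])
    qed
  qed (simp_all add: kernel_centre_def)
  then show ?thesis
    unfolding H_op_eq by (intro tendsto_intros)
qed

lemma abs_H_op_diff_le:
  assumes d: "d > 1" and f: "memLp (nu_star d hstar) 2 f" and t: "\<bar>t - h\<bar> < 1"
  shows "\<bar>H_op d t f a - H_op d h f a\<bar> \<le> 2 * Lp_norm (nu_star d hstar) 2 f
           * max (H_envelope d hstar (h - 1) a) (H_envelope d hstar (h + 1) a)"
proof -
  define N where "N = Lp_norm (nu_star d hstar) 2 f"
  define G where "G = max (H_envelope d hstar (h - 1) a) (H_envelope d hstar (h + 1) a)"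
  have N: "N \<ge> 0" by (simp add: N_def Lp_norm_nonneg)
  have "H_envelope d hstar t a \<le> G" "H_envelope d hstar h a \<le> G"
    using t H_envelope_le_max[OF d, of "h - 1" _ "h + 1"] by (auto simp: G_def)
  then have "N * H_envelope d hstar t a \<le> N * G" "N * H_envelope d hstar h a \<le> N * G"
    using N by (auto intro: mult_left_mono)
  then show ?thesis
    using abs_H_op_le[OF d f, of t a] abs_H_op_le[OF d f, of h a]
    unfolding N_def G_def by linarith
qed

lemma tendsto_Lp_norm_H_op_diff:
  assumes d: "d \<ge> 2" and f: "memLp (nu_star d hstar) 2 f"
  shows "((\<lambda>t. Lp_norm (nu_star d hstar) (2 * real d) (\<lambda>a. H_op d t f a - H_op d h f a)) \<longlongrightarrow> 0) (at h)"
proof -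
  have d1: "d > 1" using d by simp
  note f_meas [measurable] = memLp_two_nu_star(1)[OF d1 f]
  define p where "p = 2 * real d"
  have p: "p > 0" using d by (simp add: p_def)
  define N where "N = Lp_norm (nu_star d hstar) 2 f"
  define G where "G a = max (H_envelope d hstar (h - 1) a) (H_envelope d hstar (h + 1) a)" for a
  define w where "w a = (2 * N) powr p
      * (H_envelope d hstar (h - 1) a powr p + H_envelope d hstar (h + 1) a powr p)" for a
  have int_w: "integrable (nu_star d hstar) w"
    using integrable_H_envelope_powr[OF d, of hstar _ 0] unfolding w_def p_def
    by (intro integrable_mult_right Bochner_Integration.integrable_add) simp_all
  have bound: "\<bar>\<bar>H_op d t f a - H_op d h f a\<bar> powr p\<bar> \<le> w a" if "\<bar>t - h\<bar> < 1" for t a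
  proof -
    have G: "G a \<ge> 0" "N \<ge> 0"
      using H_envelope_nonneg[OF d1] by (auto simp: G_def N_def Lp_norm_nonneg le_max_iff_disj)
    have "\<bar>H_op d t f a - H_op d h f a\<bar> powr p \<le> (2 * N * G a) powr p"
      using abs_H_op_diff_le[OF d1 f that] p by (intro powr_mono2) (auto simp: N_def G_def)
    also have "\<dots> = (2 * N) powr p * G a powr p"
      using G by (simp add: powr_mult)
    also have "G a powr p
        \<le> H_envelope d hstar (h - 1) a powr p + H_envelope d hstar (h + 1) a powr p"
      by (simp add: G_def max_def)
    finally show ?thesis
      using G by (simp add: w_def mult_left_mono)
  qed
  have "((\<lambda>t. LINT a|nu_star d hstar. \<bar>H_op d t f a - H_op d h f a\<bar> powr p)
      \<longlongrightarrow> (LINT a|nu_star d hstar. 0)) (at h)"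
  proof (rule integral_dominated_convergence_at[OF _ _ int_w])
    have "((\<lambda>t. \<bar>H_op d t f a - H_op d h f a\<bar> powr p) \<longlongrightarrow> 0) (at h)" for a
      using tendsto_H_op_level[OF d1 f, where h = h and a = a] p
      by (intro tendsto_zero_powrI tendsto_rabs_zero) (auto simp: LIM_zero)
    then show "AE a in nu_star d hstar.
        ((\<lambda>t. \<bar>H_op d t f a - H_op d h f a\<bar> powr p) \<longlongrightarrow> 0) (at h)"
      by simp
    show "\<forall>\<^sub>F t in at h. AE a in nu_star d hstar. \<bar>\<bar>H_op d t f a - H_op d h f a\<bar> powr p\<bar> \<le> w a"
      using eventually_at_dist_less[OF zero_less_one] by eventually_elim (intro AE_I2 bound)
  qed (simp_all add: nu_star_def)
  then have "((\<lambda>t. (LINT a|nu_star d hstar. \<bar>H_op d t f a - H_op d h f a\<bar> powr p) powr (1 / p))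
      \<longlongrightarrow> 0) (at h)"
    using p by (intro tendsto_zero_powrI[where b = "1 / p"]) (auto intro!: integral_nonneg_AE)
  then show ?thesis
    by (simp add: Lp_norm_def p_def)
qed

theorem lemma6p3:
  fixes d :: nat and hstar :: real
  assumes "d \<ge> 2" and "hstar > 0"
  shows "(\<forall>h s. \<exists>C::real. \<forall>f. memLp (nu_star d hstar) 2 f \<longrightarrow>
            memLp (nu_star d hstar) (2 * real d) (theta s (H_op d h f)) \<and>
            Lp_norm (nu_star d hstar) (2 * real d) (theta s (H_op d h f))
              \<le> C * Lp_norm (nu_star d hstar) 2 f)
       \<and> (\<forall>f. memLp (nu_star d hstar) 2 f \<longrightarrow>
            (\<forall>h \<in> {hstar - 1 <..< hstar + 1}.
               ((\<lambda>h'. Lp_norm (nu_star d hstar) (2 * real d)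
                        (\<lambda>a. H_op d h' f a - H_op d h f a)) \<longlongrightarrow> 0)
               (at h within {hstar - 1 <..< hstar + 1})))"
proof (intro conjI allI impI ballI)
  fix h s
  show "\<exists>C::real. \<forall>f. memLp (nu_star d hstar) 2 f \<longrightarrow>
            memLp (nu_star d hstar) (2 * real d) (theta s (H_op d h f)) \<and>
            Lp_norm (nu_star d hstar) (2 * real d) (theta s (H_op d h f))
              \<le> C * Lp_norm (nu_star d hstar) 2 f"
    using memLp_shifted_H_op[OF assms(1)]
    by (intro exI[of _ "Lp_norm (nu_star d hstar) (2 * real d) (\<lambda>a. H_envelope d hstar h (a + s))"])
      (simp add: mult.commute)
next
  fix f h
  assume "memLp (nu_star d hstar) 2 f"
  from tendsto_Lp_norm_H_op_diff[OF assms(1) this]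
  show "((\<lambda>h'. Lp_norm (nu_star d hstar) (2 * real d) (\<lambda>a. H_op d h' f a - H_op d h f a)) \<longlongrightarrow> 0)
      (at h within {hstar - 1 <..< hstar + 1})"
    by (rule tendsto_within_subset) simp
qed

end
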